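(* The Sierpiński gasket iterated graph system and the pentagonal Sierpiński carpet iterated graph system are of bounded geometry.
   Context: Graphs: $(V,E)$, $V$ finite non-empty, $E\subseteq V\times V$, $(x,y)\in E\Rightarrow(y,x)\notin E$; $\{x,y\}\in E$ means either orientation; a path is a sequence $[x_1,\dots,x_k]$ ($k\ge1$) with $\{x_i,x_{i+1}\}\in E$, of length $k-1$; $d_G$ is the path metric. An iterated graph system $\mathfrak R$ consists of a connected graph $G_1=(S,E)$, a finite set $\mathcal T$ of types, a surjective typing $\mathfrak t:E\to\mathcal T$ and non-empty gluing rules $I_t\subseteq S\times S$. With $W_m=S^m$, $W_\#=\bigcup_{m\ge1}W_m$, $[w]_k=w_1\cdots w_k$, the replacement graphs $G_m=(W_m,E_m)$ are defined recursively: $(w,v)\in E_{m+1}$ iff either (1) $[w]_m=[v]_m$ and $(w_{m+1},v_{m+1})\in E$ (type $\mathfrak t(w_{m+1},v_{m+1})$), or (2) $([w]_m,[v]_m)\in E_m$ and $(w_{m+1},v_{m+1})\in I_{\mathfrak t([w]_m,[v]_m)}$ (type $\mathfrak t([w]_m,[v]_m)$). For $n\ge k$, $\pi_{n,k}$ maps a path of $G_n$ to the path of $G_k$ obtained by replacing each vertex $w$ by $[w]_k$ and deleting consecutive repetitions. A path $\theta$ in $G_m$ is an intersection path if there are paths $\theta_n$ in $G_n$ ($n\in\mathbb N$) with $\theta_m=\theta$, $\pi_{n,k}(\theta_n)=\theta_k$ for all $n>k$, and $\lim_n\operatorname{len}(\theta_n)<\infty$. $\mathcal N(w)=\{v\in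 W_{|w|}:$ there is an intersection path from $w$ to $v\}$; $\mathfrak R$ is of bounded geometry if $\sup_{w\in W_\#}\operatorname{diam}_{d_{G_{|w|}}}(\mathcal N(w))<\infty$. Sierpiński gasket: $S=\{0,1,2\}$, $E=\{(0,1),(1,2),(0,2)\}$ of types $a,b,c$ respectively, $I_a=\{(1,0)\}$, $I_b=\{(2,1)\}$, $I_c=\{(2,0)\}$. Pentagonal Sierpiński carpet: $S=\{0,1,2,3,4\}$, $E=\{(0,1),(1,2),(2,3),(3,4),(4,0)\}$ of types $a,b,c,d,e$ respectively, $I_a=\{(1,0),(2,4)\}$, $I_b=\{(2,1),(3,0)\}$, $I_c=\{(3,2),(4,1)\}$, $I_d=\{(4,3),(0,2)\}$, $I_e=\{(0,4),(1,3)\}$. *)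

theory Defs
  imports Main "HOL-Library.Extended_Nat"
begin

definition gpath :: "'v set \<Rightarrow> ('v \<times> 'v) set \<Rightarrow> 'v list \<Rightarrow> bool" where
  "gpath V Ed p \<longleftrightarrow> p \<noteq> [] \<and> set p \<subseteq> V \<and>
     successively (\<lambda>x y. (x, y) \<in> Ed \<or> (y, x) \<in> Ed) p"

definition plen :: "'v list \<Rightarrow> nat" where
  "plen p = length p - 1"

definition gdist :: "'v set \<Rightarrow> ('v \<times> 'v) set \<Rightarrow> 'v \<Rightarrow> 'v \<Rightarrow> enat" where
  "gdist V Ed x y = (INF p \<in> {p. gpath V Ed p \<and> hd p = x \<and> last p = y}. enat (plen p))"

definition gdiam :: "'v set \<Rightarrow> ('v \<times> 'v) set \<Rightarrow> 'v set \<Rightarrow> enat" where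
  "gdiam V Ed A = (SUP x \<in> A. SUP y \<in> A. gdist V Ed x y)"

definition gconnected :: "'v set \<Rightarrow> ('v \<times> 'v) set \<Rightarrow> bool" where
  "gconnected V Ed \<longleftrightarrow> (\<forall>x\<in>V. \<forall>y\<in>V. \<exists>p. gpath V Ed p \<and> hd p = x \<and> last p = y)"

text \<open>Parameters: S (vertices of G_1), E (edges of G_1), T (types),
  t (typing, meaningful on E), I (gluing rules).\<close>

definition IGS :: "'a set \<Rightarrow> ('a \<times> 'a) set \<Rightarrow> 't set \<Rightarrow> ('a \<times> 'a \<Rightarrow> 't)
                    \<Rightarrow> ('t \<Rightarrow> ('a \<times> 'a) set) \<Rightarrow> bool" where
  "IGS S E T t I \<longleftrightarrow> finite S \<and> S \<noteq> {} \<and> E \<subseteq> S \<times> S \<and>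
     (\<forall>x y. (x, y) \<in> E \<longrightarrow> (y, x) \<notin> E) \<and> gconnected S E \<and>
     finite T \<and> t ` E = T \<and> (\<forall>\<tau>\<in>T. I \<tau> \<noteq> {} \<and> I \<tau> \<subseteq> S \<times> S)"

text \<open>Words of length m over S. A word w_1 ... w_m is the list [w_1, ..., w_m];
  hence the prefix [w]_k is take k w and the last letter is appended at the end.\<close>

definition words :: "'a set \<Rightarrow> nat \<Rightarrow> 'a list set" where
  "words S m = {w. length w = m \<and> set w \<subseteq> S}"

definition words_all :: "'a set \<Rightarrow> 'a list set" where
  "words_all S = (\<Union>m\<in>{1..}. words S m)"

text \<open>Typed edges of the replacement graph G_m: triples (w, v, type).\<close>

fun ledges :: "'a set \<Rightarrow> ('a \<times> 'a) set \<Rightarrow> ('a \<times> 'a \<Rightarrow> 't) \<Rightarrow> ('t \<Rightarrow> ('a \<times> 'a) set)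
               \<Rightarrow> nat \<Rightarrow> ('a list \<times> 'a list \<times> 't) set" where
  "ledges S E t I 0 = {}"
| "ledges S E t I (Suc 0) = {([x], [y], t (x, y)) | x y. (x, y) \<in> E}"
| "ledges S E t I (Suc (Suc m)) =
     {(u @ [x], u @ [y], t (x, y)) | u x y. u \<in> words S (Suc m) \<and> (x, y) \<in> E}
   \<union> {(u @ [x], u' @ [y], \<tau>) | u u' x y \<tau>.
        (u, u', \<tau>) \<in> ledges S E t I (Suc m) \<and> (x, y) \<in> I \<tau>}"

definition redges :: "'a set \<Rightarrow> ('a \<times> 'a) set \<Rightarrow> ('a \<times> 'a \<Rightarrow> 't) \<Rightarrow> ('t \<Rightarrow> ('a \<times> 'a) set)
               \<Rightarrow> nat \<Rightarrow> ('a list \<times> 'a list) set" where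
  "redges S E t I m = {(w, v). \<exists>\<tau>. (w, v, \<tau>) \<in> ledges S E t I m}"

definition proj :: "nat \<Rightarrow> 'a list list \<Rightarrow> 'a list list" where
  "proj k p = remdups_adj (map (take k) p)"

definition intersection_path :: "'a set \<Rightarrow> ('a \<times> 'a) set \<Rightarrow> ('a \<times> 'a \<Rightarrow> 't)
     \<Rightarrow> ('t \<Rightarrow> ('a \<times> 'a) set) \<Rightarrow> nat \<Rightarrow> 'a list list \<Rightarrow> bool" where
  "intersection_path S E t I m \<theta> \<longleftrightarrow> 1 \<le> m \<and>
     (\<exists>\<Theta> :: nat \<Rightarrow> 'a list list.
        (\<forall>n\<ge>1. gpath (words S n) (redges S E t I n) (\<Theta> n)) \<and>
        \<Theta> m = \<theta> \<and>
        (\<forall>n k. 1 \<le> k \<and> k < n \<longrightarrow> proj k (\<Theta> n) = \<Theta> k) \<and>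
        convergent (\<lambda>n. real (plen (\<Theta> n))))"

definition NB :: "'a set \<Rightarrow> ('a \<times> 'a) set \<Rightarrow> ('a \<times> 'a \<Rightarrow> 't)
     \<Rightarrow> ('t \<Rightarrow> ('a \<times> 'a) set) \<Rightarrow> 'a list \<Rightarrow> 'a list set" where
  "NB S E t I w = {v \<in> words S (length w). \<exists>\<theta>.
      intersection_path S E t I (length w) \<theta> \<and> hd \<theta> = w \<and> last \<theta> = v}"

definition bounded_geometry :: "'a set \<Rightarrow> ('a \<times> 'a) set \<Rightarrow> ('a \<times> 'a \<Rightarrow> 't)
     \<Rightarrow> ('t \<Rightarrow> ('a \<times> 'a) set) \<Rightarrow> bool" where
  "bounded_geometry S E t I \<longleftrightarrow>
     (SUP w \<in> words_all S.
        gdiam (words S (length w)) (redges S E t I (length w)) (NB S E t I w)) < \<infinity>"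

datatype sg_type = SGa | SGb | SGc

definition sg_S :: "nat set" where "sg_S = {0, 1, 2}"
definition sg_E :: "(nat \<times> nat) set" where "sg_E = {(0, 1), (1, 2), (0, 2)}"
definition sg_T :: "sg_type set" where "sg_T = {SGa, SGb, SGc}"
definition sg_t :: "nat \<times> nat \<Rightarrow> sg_type" where
  "sg_t e = (if e = (0, 1) then SGa else if e = (1, 2) then SGb else SGc)"
fun sg_I :: "sg_type \<Rightarrow> (nat \<times> nat) set" where
  "sg_I SGa = {(1, 0)}"
| "sg_I SGb = {(2, 1)}"
| "sg_I SGc = {(2, 0)}"

datatype pc_type = PCa | PCb | PCc | PCd | PCe

definition pc_S :: "nat set" where "pc_S = {0, 1, 2, 3, 4}"
definition pc_E :: "(nat \<times> nat) set" where
  "pc_E = {(0, 1), (1, 2), (2, 3), (3, 4), (4, 0)}"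
definition pc_T :: "pc_type set" where "pc_T = {PCa, PCb, PCc, PCd, PCe}"
definition pc_t :: "nat \<times> nat \<Rightarrow> pc_type" where
  "pc_t e = (if e = (0, 1) then PCa else if e = (1, 2) then PCb
             else if e = (2, 3) then PCc else if e = (3, 4) then PCd else PCe)"
fun pc_I :: "pc_type \<Rightarrow> (nat \<times> nat) set" where
  "pc_I PCa = {(1, 0), (2, 4)}"
| "pc_I PCb = {(2, 1), (3, 0)}"
| "pc_I PCc = {(3, 2), (4, 1)}"
| "pc_I PCd = {(4, 3), (0, 2)}"
| "pc_I PCe = {(0, 4), (1, 3)}"

end

theory Submission
  imports Defs
begin

text \<open>Let \<theta> be an intersection path at level m, approximated by paths \<theta>_n of bounded length.
  Projection does not increase length, so the lengths stall at some level n \<ge> m; then every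
  edge of \<theta>_{n+1} joins two different cells of level n, i.e. it is created by a gluing rule.
  Writing vertices of G_{n+1} as u @ [c], such an edge links (u, c) to (v, e) with (c, e) in the
  gluing rule of the edge between u and v. Conditions on G_2 alone, which hold for the gasket and
  the pentagonal carpet, force by induction on n every (u, c) into a set of at most four such pairs
  closed under these links: a corner u' @ [d] @ [d] behaves like (u', d) one level down, and a
  point on a glued side has at most its twin in the same cell and the two twins across the side.
  Hence an intersection path has at most four vertices, every vertex of N(w) is within distance 3
  of w, and diam N(w) \<le> 6.\<close>

lemma ledges_Suc_iff:
  "(p, q, \<tau>) \<in> ledges S E t I (Suc n) \<longleftrightarrow>
    (\<exists>u x y. p = u @ [x] \<and> q = u @ [y] \<and> u \<in> words S n \<and> (x, y) \<in> E \<and> \<tau> = t (x, y)) \<or>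
    (\<exists>u v x y. p = u @ [x] \<and> q = v @ [y] \<and> (u, v, \<tau>) \<in> ledges S E t I n \<and> (x, y) \<in> I \<tau>)"
proof (cases n)
  case 0
  then show ?thesis by (auto simp: words_def)
qed auto

lemma ledges_Suc_snoc_iff:
  "(u @ [d], v @ [f], \<tau>) \<in> ledges S E t I (Suc n) \<longleftrightarrow>
    (u = v \<and> u \<in> words S n \<and> (d, f) \<in> E \<and> \<tau> = t (d, f)) \<or>
    ((u, v, \<tau>) \<in> ledges S E t I n \<and> (d, f) \<in> I \<tau>)"
  unfolding ledges_Suc_iff by auto

lemma ledges_not_Nil: "(p, q, \<tau>) \<in> ledges S E t I n \<Longrightarrow> p \<noteq> [] \<and> q \<noteq> []"
  by (cases n) (auto simp: ledges_Suc_iff simp del: ledges.simps(2,3))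

lemma gpath_remove_loops:
  "gpath V Ed p \<Longrightarrow>
     \<exists>q. gpath V Ed q \<and> hd q = hd p \<and> last q = last p \<and> set q \<subseteq> set p \<and> distinct q"
proof (induction "length p" arbitrary: p rule: less_induct)
  case less
  show ?case
  proof (cases "distinct p")
    case False
    then obtain xs y ys zs where p: "p = xs @ [y] @ ys @ [y] @ zs"
      using not_distinct_decomp by blast
    let ?p = "xs @ [y] @ zs"
    have "gpath V Ed ?p"
      using less.prems unfolding p gpath_def by (auto simp: successively_append_iff successively_Cons)
    moreover have "length ?p < length p" unfolding p by simp
    ultimately obtain q where "gpath V Ed q" "hd q = hd ?p" "last q = last ?p" "set q \<subseteq> set ?p"
      "distinct q" using less.hyps by blast
    moreover have "hd ?p = hd p" "last ?p = last p" "set ?p \<subseteq> set p"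
      unfolding p by (cases xs; auto)+
    ultimately show ?thesis by auto
  qed (use less.prems in blast)
qed

lemma gpath_shortcut:
  assumes "gpath V Ed p"
  obtains q where "gpath V Ed q" "hd q = hd p" "last q = last p" "plen q < card (set p)"
proof -
  obtain q where q: "gpath V Ed q" "hd q = hd p" "last q = last p" "set q \<subseteq> set p" "distinct q"
    using gpath_remove_loops[OF assms] by blast
  have "length q \<le> card (set p)"
    using q(4,5) distinct_card card_mono[OF finite_set] by metis
  moreover have "q \<noteq> []" using q(1) unfolding gpath_def by blast
  ultimately have "plen q < card (set p)" unfolding plen_def by (cases q) auto
  with q(1-3) show thesis by (rule that)
qed

lemma gdist_le_plen: "gpath V Ed q \<Longrightarrow> gdist V Ed (hd q) (last q) \<le> enat (plen q)"
  unfolding gdist_def by (rule INF_lower) auto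

lemma gpath_rev: "gpath V Ed p \<Longrightarrow> gpath V Ed (rev p)"
  unfolding gpath_def by (auto simp: successively_rev elim: successively_mono)

lemma gpath_append:
  assumes "gpath V Ed p" "gpath V Ed q" "last p = hd q"
  shows "gpath V Ed (p @ tl q)"
proof -
  obtain x ys where q: "q = x # ys" using assms(2) unfolding gpath_def by (cases q) auto
  let ?R = "\<lambda>x y. (x, y) \<in> Ed \<or> (y, x) \<in> Ed"
  have "successively ?R (x # ys)" using assms(2) q unfolding gpath_def by blast
  then have "successively ?R ys" "ys = [] \<or> ?R x (hd ys)" by (auto simp: successively_Cons)
  then show ?thesis using assms q unfolding gpath_def by (auto simp: successively_append_iff)
qed

lemma gdist_le_plen_add:
  assumes "gpath V Ed p" "gpath V Ed q" "hd p = hd q"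
  shows "gdist V Ed (last p) (last q) \<le> enat (plen p + plen q)"
proof -
  have ne: "p \<noteq> []" "q \<noteq> []" using assms unfolding gpath_def by auto
  let ?r = "rev p @ tl q"
  have "gpath V Ed ?r"
    using gpath_append[OF gpath_rev[OF assms(1)] assms(2)] assms(3) ne by (simp add: last_rev)
  moreover have "hd ?r = last p" using ne by (simp add: hd_rev)
  moreover have "last ?r = last q"
  proof (cases "tl q = []")
    case True
    then have "q = [hd q]" using ne(2) by (metis list.collapse)
    then show ?thesis using True ne(1) assms(3) by (simp add: last_rev) (metis last_ConsL)
  next
    case False
    then show ?thesis using ne(2) by (simp add: last_tl)
  qed
  moreover have "plen ?r = plen p + plen q"
    using ne unfolding plen_def by (cases p; cases q) auto
  ultimately show ?thesis using gdist_le_plen[of V Ed ?r] by simp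
qed

lemma gconnectedI_diameter_two:
  assumes "\<And>x y. x \<in> V \<Longrightarrow> y \<in> V \<Longrightarrow>
    x = y \<or> (x, y) \<in> Ed \<or> (y, x) \<in> Ed \<or>
    (\<exists>z\<in>V. ((x, z) \<in> Ed \<or> (z, x) \<in> Ed) \<and> ((z, y) \<in> Ed \<or> (y, z) \<in> Ed))"
  shows "gconnected V Ed"
  unfolding gconnected_def
proof (intro ballI)
  fix x y assume "x \<in> V" "y \<in> V"
  then consider "x = y" | "(x, y) \<in> Ed \<or> (y, x) \<in> Ed"
    | z where "z \<in> V" "(x, z) \<in> Ed \<or> (z, x) \<in> Ed" "(z, y) \<in> Ed \<or> (y, z) \<in> Ed"
    using assms by blast
  then show "\<exists>p. gpath V Ed p \<and> hd p = x \<and> last p = y"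
  proof cases
    case 1 then show ?thesis using \<open>x \<in> V\<close> by (intro exI[of _ "[x]"]) (simp add: gpath_def)
  next
    case 2 then show ?thesis using \<open>x \<in> V\<close> \<open>y \<in> V\<close> by (intro exI[of _ "[x, y]"]) (simp add: gpath_def)
  next
    case 3 then show ?thesis using \<open>x \<in> V\<close> \<open>y \<in> V\<close> by (intro exI[of _ "[x, z, y]"]) (simp add: gpath_def)
  qed
qed

lemma successively_invariant:
  assumes "successively R xs" "P (hd xs)" "\<And>x y. R x y \<Longrightarrow> P x \<Longrightarrow> P y"
  shows "\<forall>x\<in>set xs. P x"
  using assms(1,2) by (induction xs rule: induct_list012) (auto intro: assms(3))

lemma nondecreasing_bounded_stalls:
  fixes f :: "nat \<Rightarrow> nat"
  assumes mono: "\<And>n. m \<le> n \<Longrightarrow> f n \<le> f (Suc n)" and bound: "\<And>n. real (f n) \<le> K"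
  shows "\<exists>n\<ge>m. f (Suc n) = f n"
proof (rule ccontr)
  assume no_stall: "\<not> ?thesis"
  have grow: "j \<le> f (m + j)" for j
  proof (induction j)
    case (Suc j)
    have "f (Suc (m + j)) \<noteq> f (m + j)" using no_stall le_add1 by blast
    then show ?case using Suc mono[of "m + j"] by simp
  qed simp
  have "real (nat \<lceil>K\<rceil> + 1) \<le> real (f (m + (nat \<lceil>K\<rceil> + 1)))"
    using grow by (simp only: of_nat_le_iff)
  also have "\<dots> \<le> K" by (rule bound)
  finally show False by linarith
qed

lemma intersection_path_gpath:
  "intersection_path S E t I m \<theta> \<Longrightarrow> gpath (words S m) (redges S E t I m) \<theta>"
  unfolding intersection_path_def by auto

lemma intersection_path_stable_level:
  assumes "intersection_path S E t I m \<theta>"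
  obtains n p where "m \<le> n" "gpath (words S (Suc n)) (redges S E t I (Suc n)) p"
    "\<theta> = proj m p" "distinct_adj (map (take n) p)"
proof -
  obtain \<Theta> where m: "1 \<le> m" and paths: "\<forall>n\<ge>1. gpath (words S n) (redges S E t I n) (\<Theta> n)"
    and "\<Theta> m = \<theta>" and proj: "\<forall>n k. 1 \<le> k \<and> k < n \<longrightarrow> proj k (\<Theta> n) = \<Theta> k"
    and conv: "convergent (\<lambda>n. real (plen (\<Theta> n)))"
    using assms unfolding intersection_path_def by blast
  have len_proj: "length (\<Theta> k) = length (remdups_adj (map (take k) (\<Theta> n)))"
    if "1 \<le> k" "k < n" for k n
    using proj that unfolding proj_def by simp
  have mono: "plen (\<Theta> n) \<le> plen (\<Theta> (Suc n))" if "m \<le> n" for n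
  proof -
    have "length (\<Theta> n) \<le> length (\<Theta> (Suc n))"
      using len_proj[of n "Suc n"] m that remdups_adj_length[of "map (take n) (\<Theta> (Suc n))"] by simp
    then show ?thesis unfolding plen_def by (rule diff_le_mono)
  qed
  obtain K where "\<forall>n. norm (real (plen (\<Theta> n))) \<le> K"
    using convergent_imp_Bseq[OF conv] by (rule BseqE)
  then have "real (plen (\<Theta> n)) \<le> K" for n by simp
  then obtain n where n: "m \<le> n" "plen (\<Theta> (Suc n)) = plen (\<Theta> n)"
    using nondecreasing_bounded_stalls[of m "\<lambda>n. plen (\<Theta> n)", OF mono] by blast
  have gp: "gpath (words S (Suc n)) (redges S E t I (Suc n)) (\<Theta> (Suc n))"
    "gpath (words S n) (redges S E t I n) (\<Theta> n)" using paths m n(1) by auto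
  then have "0 < length (\<Theta> (Suc n))" "0 < length (\<Theta> n)" unfolding gpath_def by auto
  then have "length (\<Theta> (Suc n)) = length (\<Theta> n)" using n(2) unfolding plen_def by linarith
  then have "distinct_adj (map (take n) (\<Theta> (Suc n)))"
    using len_proj[of n "Suc n"] m n(1) by (simp add: distinct_adj_conv_length_remdups_adj)
  moreover have "\<theta> = proj m (\<Theta> (Suc n))"
    using proj m n(1) \<open>\<Theta> m = \<theta>\<close> by auto
  ultimately show thesis using that n(1) gp(1) by blast
qed

text \<open>(c, e) \<in> cell_glue E t I d f iff the vertices [d, c] and [f, e] of G_2 are joined by
  an edge of kind (2); the gluing rule of the edge between d and f is read from the side of d.\<close>

definition cell_glue :: "('a \<times> 'a) set \<Rightarrow> ('a \<times> 'a \<Rightarrow> 't) \<Rightarrow> ('t \<Rightarrow> ('a \<times> 'a) set)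
    \<Rightarrow> 'a \<Rightarrow> 'a \<Rightarrow> ('a \<times> 'a) set" where
  "cell_glue E t I d f =
     (if (d, f) \<in> E then I (t (d, f)) else {}) \<union> (if (f, d) \<in> E then (I (t (f, d)))\<inverse> else {})"

definition on_one_side :: "('t \<Rightarrow> ('a \<times> 'a) set) \<Rightarrow> 'a set \<Rightarrow> bool" where
  "on_one_side I A \<longleftrightarrow> (\<exists>\<tau>. A \<subseteq> Domain (I \<tau>) \<or> A \<subseteq> Range (I \<tau>))"

lemma cell_glue_swap: "(c, e) \<in> cell_glue E t I d f \<longleftrightarrow> (e, c) \<in> cell_glue E t I f d"
  unfolding cell_glue_def by auto

lemma on_one_side_swap: "on_one_side J {d, c} \<Longrightarrow> on_one_side J {c, d}"
  by (simp add: insert_commute)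

lemma not_on_one_side_if_two_pairs:
  assumes "\<And>\<tau>. finite (I \<tau>)" "\<And>\<tau>. card (I \<tau>) \<le> 2"
    and corner: "\<And>d e f. (d, e) \<notin> cell_glue E t I d f"
    and "d \<noteq> c" "{d, c} \<subseteq> Domain (cell_glue E t I a b)"
  shows "\<not> on_one_side I {a, d, c}"
proof
  assume "on_one_side I {a, d, c}"
  then obtain \<tau> where "{a, d, c} \<subseteq> fst ` I \<tau> \<or> {a, d, c} \<subseteq> snd ` I \<tau>"
    unfolding on_one_side_def fst_eq_Domain snd_eq_Range by blast
  then have "card {a, d, c} \<le> card (I \<tau>)"
    using assms(1) by (meson card_image_le card_mono finite_imageI order_trans)
  moreover have "a \<noteq> d" "a \<noteq> c" using corner assms(5) by blast+
  ultimately show False using assms(2)[of \<tau>] \<open>d \<noteq> c\<close> by simp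
qed

locale small_junction_igs =
  fixes S :: "'a set" and E :: "('a \<times> 'a) set" and t :: "'a \<times> 'a \<Rightarrow> 't"
    and I :: "'t \<Rightarrow> ('a \<times> 'a) set"
  assumes E_asym: "(x, y) \<in> E \<Longrightarrow> (y, x) \<notin> E"
    and I_single_valued: "single_valued (I \<tau>)"
    and I_converse_single_valued: "single_valued ((I \<tau>)\<inverse>)"
    and corner_not_glued: "(d, e) \<notin> cell_glue E t I d f"
    and cell_glue_unique:
      "(c, e) \<in> cell_glue E t I d f \<Longrightarrow> (c, e') \<in> cell_glue E t I d f' \<Longrightarrow> f = f' \<and> e = e'"
    and cell_glue_on_side:
      "(c, e) \<in> cell_glue E t I d f \<Longrightarrow> on_one_side I {d, c} \<Longrightarrow> f = c \<and> e = d"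
    and side_not_on_side:
      "d \<noteq> c \<Longrightarrow> {d, c} \<subseteq> Domain (cell_glue E t I a b) \<Longrightarrow> \<not> on_one_side I {a, d, c}"
begin

abbreviation L where "L \<equiv> ledges S E t I"

lemma E_irrefl: "(x, x) \<notin> E"
  using E_asym[of x x] by blast

lemma Domain_cell_glue_unique:
  assumes "x \<in> Domain (cell_glue E t I a b)" "x \<in> Domain (cell_glue E t I a b')"
  shows "b = b'"
proof -
  obtain e e' where "(x, e) \<in> cell_glue E t I a b" "(x, e') \<in> cell_glue E t I a b'"
    using assms by blast
  then show ?thesis using cell_glue_unique by blast
qed

lemma ledges_irrefl: "(p, p, \<tau>) \<notin> L n"
proof (induction n arbitrary: p \<tau>)
  case (Suc n)
  then show ?case using E_irrefl by (auto simp: ledges_Suc_iff simp del: ledges.simps)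
qed simp

lemma ledges_unique:
  "(p, q, \<tau>) \<in> L n \<Longrightarrow> (p, q, \<tau>') \<in> L n \<Longrightarrow> \<tau> = \<tau>'"
  "(p, q, \<tau>) \<in> L n \<Longrightarrow> (q, p, \<tau>') \<notin> L n"
proof (induction n arbitrary: p q \<tau> \<tau>')
  case (Suc n)
  { case 1 then show ?case
      using Suc.IH ledges_irrefl by (auto simp: ledges_Suc_iff simp del: ledges.simps) }
  { case 2 then show ?case
      using Suc.IH ledges_irrefl E_asym by (auto simp: ledges_Suc_iff simp del: ledges.simps) }
qed simp_all

text \<open>The same relation one level up: (c, e) \<in> glue n u v iff u @ [c] and v @ [e] are joined
  in G_{n+1} by an edge of kind (2); so glue 1 [d] [f] = cell_glue E t I d f.\<close>

definition glue :: "nat \<Rightarrow> 'a list \<Rightarrow> 'a list \<Rightarrow> ('a \<times> 'a) set" where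
  "glue n u v = {(c, e). \<exists>\<tau>. ((u, v, \<tau>) \<in> L n \<and> (c, e) \<in> I \<tau>) \<or> ((v, u, \<tau>) \<in> L n \<and> (e, c) \<in> I \<tau>)}"

lemma converse_glue: "(glue n u v)\<inverse> = glue n v u"
  unfolding glue_def by blast

lemma glue_Nil: "glue n [] v = {}"
  unfolding glue_def using ledges_not_Nil by fast

lemma glue_Nil_right: "glue n u [] = {}"
  using glue_Nil converse_glue by (metis converse_empty)

lemma glue_cases:
  obtains "glue n u v = {}"
  | \<tau> where "(u, v, \<tau>) \<in> L n" "glue n u v = I \<tau>"
  | \<tau> where "(v, u, \<tau>) \<in> L n" "glue n u v = (I \<tau>)\<inverse>"
proof -
  consider \<tau> where "(u, v, \<tau>) \<in> L n" | \<tau> where "(v, u, \<tau>) \<in> L n"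
    | "\<forall>\<tau>. (u, v, \<tau>) \<notin> L n \<and> (v, u, \<tau>) \<notin> L n" by blast
  then show thesis
  proof cases
    case (1 \<tau>)
    then have "glue n u v = I \<tau>" unfolding glue_def by (auto dest: ledges_unique)
    with 1 that show thesis by blast
  next
    case (2 \<tau>)
    then have "glue n u v = (I \<tau>)\<inverse>" unfolding glue_def by (auto dest: ledges_unique)
    with 2 that show thesis by blast
  next
    case 3
    then have "glue n u v = {}" unfolding glue_def by blast
    with that show thesis by blast
  qed
qed

lemma single_valued_glue: "single_valued (glue n u v)"
  by (cases n u v rule: glue_cases) (auto intro: I_single_valued I_converse_single_valued single_valuedI)

lemma single_valued_converse_glue: "single_valued ((glue n u v)\<inverse>)"
  unfolding converse_glue by (rule single_valued_glue)

lemma on_one_side_Domain_glue: "A \<subseteq> Domain (glue n u v) \<Longrightarrow> on_one_side I A"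
  unfolding on_one_side_def by (cases n u v rule: glue_cases) (simp_all, blast+)

lemma on_one_side_Range_glue: "A \<subseteq> Range (glue n u v) \<Longrightarrow> on_one_side I A"
  by (metis Domain_converse converse_glue on_one_side_Domain_glue)

lemma glue_Suc:
  "glue (Suc n) (u @ [d]) (v @ [f]) =
     (if u = v then (if u \<in> words S n then cell_glue E t I d f else {})
      else if (d, f) \<in> glue n u v then glue n u v else {})"
proof (cases "u = v")
  case True
  have "(u @ [x], u @ [y], \<tau>) \<in> L (Suc n) \<longleftrightarrow> u \<in> words S n \<and> (x, y) \<in> E \<and> \<tau> = t (x, y)"
    for x y \<tau>
    using ledges_irrefl unfolding ledges_Suc_snoc_iff by blast
  then show ?thesis
    using True E_asym unfolding glue_def cell_glue_def by auto
next
  case False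
  then have "glue (Suc n) (u @ [d]) (v @ [f]) =
      {(c, e). \<exists>\<tau>. ((u, v, \<tau>) \<in> L n \<and> (d, f) \<in> I \<tau> \<and> (c, e) \<in> I \<tau>) \<or>
                   ((v, u, \<tau>) \<in> L n \<and> (f, d) \<in> I \<tau> \<and> (e, c) \<in> I \<tau>)}"
    unfolding glue_def ledges_Suc_snoc_iff by blast
  also have "\<dots> = (if (d, f) \<in> glue n u v then glue n u v else {})"
    by (cases n u v rule: glue_cases) (auto simp: glue_def dest: ledges_unique)
  finally show ?thesis using False by simp
qed

lemma glue_Suc_snocE:
  assumes "(c, e) \<in> glue (Suc n) (u @ [d]) y"
  obtains (inner) g where "y = u @ [g]" "(c, e) \<in> cell_glue E t I d g"
  | (outer) v g where "y = v @ [g]" "u \<noteq> v" "(d, g) \<in> glue n u v" "(c, e) \<in> glue n u v"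
proof -
  obtain v g where y: "y = v @ [g]"
    using assms glue_Nil_right by (cases y rule: rev_exhaust) auto
  show thesis
  proof (cases "u = v")
    case True
    then have "(c, e) \<in> cell_glue E t I d g"
      using assms unfolding y glue_Suc by (simp split: if_splits)
    then show thesis using that(1) y True by blast
  next
    case False
    then have "(d, g) \<in> glue n u v" "(c, e) \<in> glue n u v"
      using assms unfolding y glue_Suc by (simp_all split: if_splits)
    then show thesis using that(2) y False by blast
  qed
qed

lemma Domain_glue_Suc_snocE:
  assumes "{d, c} \<subseteq> Domain (glue (Suc n) (u @ [a]) y)"
  obtains (inner) b where "y = u @ [b]" "{d, c} \<subseteq> Domain (cell_glue E t I a b)"
  | (outer) z b where "y = z @ [b]" "u \<noteq> z" "(a, b) \<in> glue n u z" "{d, c} \<subseteq> Domain (glue n u z)"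
proof -
  obtain e where "(d, e) \<in> glue (Suc n) (u @ [a]) y"
    using assms by blast
  then show thesis
  proof (cases rule: glue_Suc_snocE)
    case (inner g)
    then show thesis using assms that(1) unfolding inner(1) glue_Suc by (simp split: if_splits)
  next
    case (outer v g)
    then show thesis using assms that(2) unfolding outer(1) glue_Suc by (simp split: if_splits)
  qed
qed

lemma side_determines_neighbour:
  "d \<noteq> c \<Longrightarrow> {d, c} \<subseteq> Domain (glue n u v) \<Longrightarrow> {d, c} \<subseteq> Domain (glue n u v') \<Longrightarrow> v = v'"
proof (induction n arbitrary: u v v')
  case 0
  then show ?case by (simp add: glue_def)
next
  case (Suc n)
  obtain u' a where u: "u = u' @ [a]"
    using Suc.prems(2) glue_Nil by (cases u rule: rev_exhaust) auto
  from Suc.prems(2)[unfolded u] show ?case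
  proof (cases rule: Domain_glue_Suc_snocE)
    case v: (inner b)
    from Suc.prems(3)[unfolded u] show ?thesis
    proof (cases rule: Domain_glue_Suc_snocE)
      case v': (inner b')
      have "b = b'" using Domain_cell_glue_unique v(2) v'(2) by (meson insert_subset)
      then show ?thesis using v(1) v'(1) by simp
    next
      case v': (outer z' b')
      have "on_one_side I {a, d, c}"
        using v'(3,4) by (intro on_one_side_Domain_glue) blast
      then show ?thesis using side_not_on_side[OF Suc.prems(1) v(2)] by contradiction
    qed
  next
    case v: (outer z b)
    from Suc.prems(3)[unfolded u] show ?thesis
    proof (cases rule: Domain_glue_Suc_snocE)
      case v': (inner b')
      have "on_one_side I {a, d, c}"
        using v(3,4) by (intro on_one_side_Domain_glue) blast
      then show ?thesis using side_not_on_side[OF Suc.prems(1) v'(2)] by contradiction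
    next
      case v': (outer z' b')
      have "z = z'" using Suc.IH[OF Suc.prems(1) v(4) v'(4)] .
      then have "b = b'" using v(3) v'(3) single_valued_glue by (metis single_valuedD)
      then show ?thesis using v(1) v'(1) \<open>z = z'\<close> by simp
    qed
  qed
qed

lemma on_one_side_glue:
  assumes "(d, g) \<in> glue n u v" "(c, e) \<in> glue n u v"
  shows "on_one_side I {d, c}" "on_one_side I {g, e}"
  using assms by (auto intro: on_one_side_Domain_glue on_one_side_Range_glue)

lemma outer_glue_unique:
  assumes "d \<noteq> c" "(d, g) \<in> glue n u v" "(c, e) \<in> glue n u v"
    "(d, g') \<in> glue n u v'" "(c, e') \<in> glue n u v'"
  shows "v = v' \<and> g = g' \<and> e = e'"
proof -
  have "v = v'" using side_determines_neighbour[OF assms(1)] assms(2-5) by blast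
  then show ?thesis using assms(2-5) single_valued_glue by (metis single_valuedD)
qed

text \<open>A pair (u, c) stands for the vertex u @ [c] of G_{n+1}.\<close>

definition glue_closed :: "nat \<Rightarrow> ('a list \<times> 'a) set \<Rightarrow> bool" where
  "glue_closed n C \<longleftrightarrow> (\<forall>(u, c) \<in> C. \<forall>v e. (c, e) \<in> glue n u v \<longrightarrow> (v, e) \<in> C)"

lemma glue_closedI:
  "(\<And>u c v e. (u, c) \<in> C \<Longrightarrow> (c, e) \<in> glue n u v \<Longrightarrow> (v, e) \<in> C) \<Longrightarrow> glue_closed n C"
  unfolding glue_closed_def by blast

lemma glue_closedD: "glue_closed n C \<Longrightarrow> (u, c) \<in> C \<Longrightarrow> (c, e) \<in> glue n u v \<Longrightarrow> (v, e) \<in> C"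
  unfolding glue_closed_def by blast

lemma glue_closed_corner:
  assumes "glue_closed n C"
  shows "glue_closed (Suc n) ((\<lambda>(v, f). (v @ [f], f)) ` C)"
proof (rule glue_closedI, clarify)
  fix v f y e
  assume "(v, f) \<in> C" and "(f, e) \<in> glue (Suc n) (v @ [f]) y"
  from this(2) show "(y, e) \<in> (\<lambda>(v, f). (v @ [f], f)) ` C"
  proof (cases rule: glue_Suc_snocE)
    case (inner g)
    then show ?thesis using corner_not_glued by blast
  next
    case (outer z g)
    then have "g = e" using single_valued_glue by (metis single_valuedD)
    then have "(z, e) \<in> C" using glue_closedD[OF assms \<open>(v, f) \<in> C\<close>] outer(3) by simp
    then show ?thesis using outer(1) \<open>g = e\<close> by force
  qed
qed

lemma off_side_neighbourE:
  assumes "\<not> on_one_side I {d, c}" "(c, e) \<in> glue (Suc n) (u @ [d]) y"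
  obtains g where "y = u @ [g]" "(c, e) \<in> cell_glue E t I d g"
  using assms(2) by (cases rule: glue_Suc_snocE) (use assms(1) on_one_side_glue(1) in blast)+

lemma glue_closed_off_side:
  assumes off_side: "\<not> on_one_side I {d, c}"
  shows "\<exists>C. (u @ [d], c) \<in> C \<and> finite C \<and> card C \<le> 2 \<and> glue_closed (Suc n) C"
proof (cases "\<exists>f e. (c, e) \<in> cell_glue E t I d f")
  case False
  have "glue_closed (Suc n) {(u @ [d], c)}"
    unfolding glue_closed_def
    using False by (auto elim: off_side_neighbourE[OF off_side])
  then show ?thesis by (intro exI[of _ "{(u @ [d], c)}"]) simp
next
  case True
  then obtain f e where glued: "(c, e) \<in> cell_glue E t I d f" by blast
  have partner: "(e, c) \<in> cell_glue E t I f d" using cell_glue_swap glued by fast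
  have partner_off_side: "\<not> on_one_side I {f, e}"
  proof
    assume side: "on_one_side I {f, e}"
    have "d = e" "c = f" using cell_glue_on_side[OF partner side] by auto
    with side have "on_one_side I {c, d}" by simp
    from on_one_side_swap[OF this] off_side show False by contradiction
  qed
  let ?C = "{(u @ [d], c), (u @ [f], e)}"
  have "glue_closed (Suc n) ?C"
  proof (rule glue_closedI)
    fix x a y e'
    assume "(x, a) \<in> ?C" and "(a, e') \<in> glue (Suc n) x y"
    then consider "(c, e') \<in> glue (Suc n) (u @ [d]) y" | "(e, e') \<in> glue (Suc n) (u @ [f]) y"
      by blast
    then show "(y, e') \<in> ?C"
    proof cases
      case 1
      then show ?thesis
        by (rule off_side_neighbourE[OF off_side]) (use cell_glue_unique glued in blast)
    next
      case 2
      then show ?thesis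
        by (rule off_side_neighbourE[OF partner_off_side]) (use cell_glue_unique partner in blast)
    qed
  qed
  then show ?thesis by (intro exI[of _ ?C]) (simp add: card_insert_if)
qed

lemma on_side_neighbourE:
  assumes "on_one_side I {d, c}" "(c, e) \<in> glue (Suc n) (u @ [d]) y"
  obtains "y = u @ [c]" "e = d"
  | v g where "y = v @ [g]" "(d, g) \<in> glue n u v" "(c, e) \<in> glue n u v"
  using assms(2) by (cases rule: glue_Suc_snocE) (use cell_glue_on_side assms(1) in blast)+

lemma on_side_pair_neighbour:
  assumes "d \<noteq> c" "on_one_side I {d, c}" "(d, g) \<in> glue n u v" "(c, e) \<in> glue n u v"
    and "(c, e') \<in> glue (Suc n) (u @ [d]) y"
  shows "(y, e') \<in> {(u @ [c], d), (v @ [g], e)}"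
  by (rule on_side_neighbourE[OF assms(2,5)]) (use outer_glue_unique assms(1,3,4) in blast)+

lemma glue_closed_on_side_unglued:
  assumes "on_one_side I {d, c}"
    and unglued: "\<And>v g e. (d, g) \<in> glue n u v \<Longrightarrow> (c, e) \<notin> glue n u v"
  shows "glue_closed (Suc n) {(u @ [d], c), (u @ [c], d)}"
proof (rule glue_closedI)
  have side': "on_one_side I {c, d}" using on_one_side_swap[OF assms(1)] .
  fix x a y e'
  assume "(x, a) \<in> {(u @ [d], c), (u @ [c], d)}" and "(a, e') \<in> glue (Suc n) x y"
  then consider "(c, e') \<in> glue (Suc n) (u @ [d]) y" | "(d, e') \<in> glue (Suc n) (u @ [c]) y"
    by blast
  then show "(y, e') \<in> {(u @ [d], c), (u @ [c], d)}"
  proof cases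
    case 1
    then show ?thesis by (rule on_side_neighbourE[OF assms(1)]) (use unglued in blast)+
  next
    case 2
    then show ?thesis by (rule on_side_neighbourE[OF side']) (use unglued in blast)+
  qed
qed

lemma glue_closed_on_side_glued:
  assumes "d \<noteq> c" "on_one_side I {d, c}"
    and out: "(d, g) \<in> glue n u v" "(c, e) \<in> glue n u v"
  shows "glue_closed (Suc n) {(u @ [d], c), (u @ [c], d), (v @ [g], e), (v @ [e], g)}"
proof -
  have out_rev: "(g, d) \<in> glue n v u" "(e, c) \<in> glue n v u"
    using out converse_glue by blast+
  have "g \<noteq> e"
    using out assms(1) single_valued_converse_glue by (metis converse_iff single_valuedD)
  have side_out: "on_one_side I {g, e}" using on_one_side_glue(2)[OF out] .
  let ?C = "{(u @ [d], c), (u @ [c], d), (v @ [g], e), (v @ [e], g)}"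
  show ?thesis
  proof (rule glue_closedI)
    fix x a y e'
    assume "(x, a) \<in> ?C" and "(a, e') \<in> glue (Suc n) x y"
    then consider "(c, e') \<in> glue (Suc n) (u @ [d]) y" | "(d, e') \<in> glue (Suc n) (u @ [c]) y"
      | "(e, e') \<in> glue (Suc n) (v @ [g]) y" | "(g, e') \<in> glue (Suc n) (v @ [e]) y"
      by blast
    then show "(y, e') \<in> ?C"
    proof cases
      case 1
      then show ?thesis using on_side_pair_neighbour[OF assms] by blast
    next
      case 2
      then show ?thesis
        using on_side_pair_neighbour[OF assms(1)[symmetric] on_one_side_swap[OF assms(2)] out(2,1)]
        by blast
    next
      case 3
      then show ?thesis using on_side_pair_neighbour[OF \<open>g \<noteq> e\<close> side_out out_rev] by blast
    next
      case 4
      then show ?thesis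
        using on_side_pair_neighbour[OF \<open>g \<noteq> e\<close>[symmetric] on_one_side_swap[OF side_out] out_rev(2,1)]
        by blast
    qed
  qed
qed

lemma glue_closed_on_side:
  assumes "d \<noteq> c" "on_one_side I {d, c}"
  shows "\<exists>C. (u @ [d], c) \<in> C \<and> finite C \<and> card C \<le> 4 \<and> glue_closed (Suc n) C"
proof (cases "\<exists>v g e. (d, g) \<in> glue n u v \<and> (c, e) \<in> glue n u v")
  case False
  let ?C = "{(u @ [d], c), (u @ [c], d)}"
  have "glue_closed (Suc n) ?C" using glue_closed_on_side_unglued[OF assms(2)] False by blast
  moreover have "card ?C \<le> 4" using card_length[of "[(u @ [d], c), (u @ [c], d)]"] by simp
  ultimately show ?thesis by (intro exI[of _ ?C]) simp
next
  case True
  then obtain v g e where out: "(d, g) \<in> glue n u v" "(c, e) \<in> glue n u v" by blast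
  let ?C = "{(u @ [d], c), (u @ [c], d), (v @ [g], e), (v @ [e], g)}"
  have "glue_closed (Suc n) ?C" using glue_closed_on_side_glued[OF assms out] .
  moreover have "card ?C \<le> 4"
    using card_length[of "[(u @ [d], c), (u @ [c], d), (v @ [g], e), (v @ [e], g)]"] by simp
  ultimately show ?thesis by (intro exI[of _ ?C]) simp
qed

lemma glue_if_redge:
  assumes "(u @ [c], v @ [e]) \<in> redges S E t I (Suc n) \<or> (v @ [e], u @ [c]) \<in> redges S E t I (Suc n)"
    and "u \<noteq> v"
  shows "(c, e) \<in> glue n u v"
proof -
  obtain \<tau> where "(u @ [c], v @ [e], \<tau>) \<in> L (Suc n) \<or> (v @ [e], u @ [c], \<tau>) \<in> L (Suc n)"
    using assms(1) unfolding redges_def by blast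
  then show ?thesis using assms(2) unfolding glue_def ledges_Suc_snoc_iff by blast
qed

lemma ex_small_glue_closed_set:
  "\<exists>C. (w, c) \<in> C \<and> finite C \<and> card C \<le> 4 \<and> glue_closed n C"
proof (induction n arbitrary: w c)
  case 0
  have "glue_closed 0 {(w, c)}" by (rule glue_closedI) (simp add: glue_def)
  then show ?case by (intro exI[of _ "{(w, c)}"]) simp
next
  case (Suc n)
  show ?case
  proof (cases w rule: rev_exhaust)
    case Nil
    have "glue_closed (Suc n) {(w, c)}" by (rule glue_closedI) (simp add: Nil glue_Nil)
    then show ?thesis by (intro exI[of _ "{(w, c)}"]) simp
  next
    case (snoc u d)
    consider (corner) "c = d" | (on_side) "c \<noteq> d" "on_one_side I {d, c}"
      | (off_side) "\<not> on_one_side I {d, c}" by blast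
    then show ?thesis
    proof cases
      case corner
      obtain C where C: "(u, d) \<in> C" "finite C" "card C \<le> 4" "glue_closed n C"
        using Suc.IH by blast
      let ?C = "(\<lambda>(v, f). (v @ [f], f)) ` C"
      have "(w, c) \<in> ?C" using C(1) snoc corner by force
      moreover have "card ?C \<le> 4"
        using card_image_le[OF C(2), of "\<lambda>(v, f). (v @ [f], f)"] C(3) by linarith
      ultimately show ?thesis using C(2) glue_closed_corner[OF C(4)] by (intro exI[of _ ?C]) simp
    next
      case on_side
      then have "d \<noteq> c" by simp
      then show ?thesis using glue_closed_on_side[OF _ on_side(2), of u n] snoc by simp
    next
      case off_side
      then obtain C where "(u @ [d], c) \<in> C" "finite C" "card C \<le> 2" "glue_closed (Suc n) C"
        using glue_closed_off_side[OF off_side, of u n] by blast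
      then show ?thesis using snoc by (intro exI[of _ C]) simp
    qed
  qed
qed

lemma glue_steps_of_crossing_path:
  assumes p: "gpath (words S (Suc n)) (redges S E t I (Suc n)) p"
    and crossing: "distinct_adj (map (take n) p)"
  shows "successively (\<lambda>q q'. (last q, last q') \<in> glue n (take n q) (take n q')) p"
proof -
  have snoc: "\<exists>u c. q = u @ [c] \<and> take n q = u \<and> last q = c" if "q \<in> set p" for q
  proof -
    have "length q = Suc n" using p that unfolding gpath_def words_def by auto
    then show ?thesis by (cases q rule: rev_exhaust) auto
  qed
  show ?thesis
    unfolding successively_conv_nth
  proof (intro allI impI)
    fix i assume i: "Suc i < length p"
    then have "p ! i \<in> set p" "p ! Suc i \<in> set p" by simp_all
    obtain u c where q: "p ! i = u @ [c]" "take n (p ! i) = u" "last (p ! i) = c"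
      using snoc[OF \<open>p ! i \<in> set p\<close>] by blast
    obtain v e where q': "p ! Suc i = v @ [e]" "take n (p ! Suc i) = v" "last (p ! Suc i) = e"
      using snoc[OF \<open>p ! Suc i \<in> set p\<close>] by blast
    have "u \<noteq> v" using distinct_adj_nth[OF crossing, of i] i q(2) q'(2) by simp
    moreover have "(p ! i, p ! Suc i) \<in> redges S E t I (Suc n) \<or> (p ! Suc i, p ! i) \<in> redges S E t I (Suc n)"
      using successively_nth[OF _ i] p unfolding gpath_def by fast
    ultimately show "(last (p ! i), last (p ! Suc i)) \<in> glue n (take n (p ! i)) (take n (p ! Suc i))"
      unfolding q(2,3) q'(2,3) using glue_if_redge q(1) q'(1) by simp
  qed
qed

lemma card_intersection_path_le:
  assumes "intersection_path S E t I m \<theta>"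
  shows "card (set \<theta>) \<le> 4"
proof -
  obtain n p where n: "m \<le> n" and p: "gpath (words S (Suc n)) (redges S E t I (Suc n)) p"
    and \<theta>: "\<theta> = proj m p" and crossing: "distinct_adj (map (take n) p)"
    using intersection_path_stable_level[OF assms] by blast
  have steps: "successively (\<lambda>q q'. (last q, last q') \<in> glue n (take n q) (take n q')) p"
    using glue_steps_of_crossing_path[OF p crossing] .
  obtain C where C: "(take n (hd p), last (hd p)) \<in> C" "finite C" "card C \<le> 4" "glue_closed n C"
    using ex_small_glue_closed_set by blast
  have in_C: "\<forall>q\<in>set p. (take n q, last q) \<in> C"
  proof (rule successively_invariant[OF steps])
    show "(take n q', last q') \<in> C"
      if "(last q, last q') \<in> glue n (take n q) (take n q')" "(take n q, last q) \<in> C" for q q'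
      using glue_closedD[OF C(4) that(2,1)] .
  qed (rule C(1))
  have "set \<theta> = take m ` set p" unfolding \<theta> proj_def by simp
  also have "\<dots> \<subseteq> (\<lambda>(u, c). take m u) ` C"
  proof
    fix x assume "x \<in> take m ` set p"
    then obtain q where "q \<in> set p" "x = take m (take n q)" using n by (auto simp: min_def)
    then show "x \<in> (\<lambda>(u, c). take m u) ` C" using in_C by force
  qed
  finally have "card (set \<theta>) \<le> card C"
    using C(2) by (meson card_image_le card_mono finite_imageI order_trans)
  then show ?thesis using C(3) by simp
qed

lemma NB_short_path:
  assumes "v \<in> NB S E t I w"
  obtains q where "gpath (words S (length w)) (redges S E t I (length w)) q"
    "hd q = w" "last q = v" "plen q \<le> 3"
proof -
  obtain \<theta> where \<theta>: "intersection_path S E t I (length w) \<theta>" "hd \<theta> = w" "last \<theta> = v"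
    using assms unfolding NB_def by blast
  obtain q where "gpath (words S (length w)) (redges S E t I (length w)) q"
    "hd q = hd \<theta>" "last q = last \<theta>" "plen q < card (set \<theta>)"
    using gpath_shortcut[OF intersection_path_gpath[OF \<theta>(1)]] by blast
  with card_intersection_path_le[OF \<theta>(1)] \<theta>(2,3) show thesis using that by simp
qed

theorem bounded_geometry: "bounded_geometry S E t I"
proof -
  let ?V = "\<lambda>w. words S (length w)" and ?R = "\<lambda>w. redges S E t I (length w)"
  have "gdiam (?V w) (?R w) (NB S E t I w) \<le> 6" for w
    unfolding gdiam_def
  proof (intro SUP_least)
    fix x y assume "x \<in> NB S E t I w" "y \<in> NB S E t I w"
    obtain p where p: "gpath (?V w) (?R w) p" "hd p = w" "last p = x" "plen p \<le> 3"
      using \<open>x \<in> NB S E t I w\<close> by (rule NB_short_path)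
    obtain q where q: "gpath (?V w) (?R w) q" "hd q = w" "last q = y" "plen q \<le> 3"
      using \<open>y \<in> NB S E t I w\<close> by (rule NB_short_path)
    have "gdist (?V w) (?R w) x y \<le> enat (plen p + plen q)"
      using gdist_le_plen_add[OF p(1) q(1)] p(2,3) q(2,3) by simp
    also have "\<dots> \<le> 6" using p(4) q(4) by (simp add: numeral_eq_enat)
    finally show "gdist (?V w) (?R w) x y \<le> 6" .
  qed
  then have "(SUP w \<in> words_all S. gdiam (?V w) (?R w) (NB S E t I w)) \<le> 6"
    by (rule SUP_least)
  also have "(6 :: enat) < \<infinity>" by (simp add: numeral_eq_enat)
  finally show ?thesis unfolding bounded_geometry_def .
qed

end

lemma ex_sg_type: "(\<exists>\<tau>::sg_type. P \<tau>) \<longleftrightarrow> P SGa \<or> P SGb \<or> P SGc"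
  by (metis sg_type.exhaust)

lemma ex_pc_type: "(\<exists>\<tau>::pc_type. P \<tau>) \<longleftrightarrow> P PCa \<or> P PCb \<or> P PCc \<or> P PCd \<or> P PCe"
  by (metis pc_type.exhaust)

lemma sg_cell_glue:
  "(c, e) \<in> cell_glue sg_E sg_t sg_I d f \<longleftrightarrow>
     (d, c, f, e) \<in> {(0, 1, 1, 0), (1, 0, 0, 1), (1, 2, 2, 1), (2, 1, 1, 2), (0, 2, 2, 0),
       (2, 0, 0, 2)}"
  by (auto simp: cell_glue_def sg_E_def sg_t_def)

lemma pc_cell_glue:
  "(c, e) \<in> cell_glue pc_E pc_t pc_I d f \<longleftrightarrow>
     (d, c, f, e) \<in> {(0, 1, 1, 0), (0, 2, 1, 4), (0, 3, 4, 1), (0, 4, 4, 0), (1, 0, 0, 1),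
       (1, 2, 2, 1), (1, 3, 2, 0), (1, 4, 0, 2), (2, 0, 1, 3), (2, 1, 1, 2), (2, 3, 3, 2),
       (2, 4, 3, 1), (3, 0, 4, 2), (3, 1, 2, 4), (3, 2, 2, 3), (3, 4, 4, 3), (4, 0, 0, 4),
       (4, 1, 0, 3), (4, 2, 3, 0), (4, 3, 3, 4)}"
  by (auto simp: cell_glue_def pc_E_def pc_t_def)

lemma sg_I_finite: "finite (sg_I \<tau>)" and sg_I_card: "card (sg_I \<tau>) \<le> 2"
  by (cases \<tau>; simp)+

lemma pc_I_finite: "finite (pc_I \<tau>)" and pc_I_card: "card (pc_I \<tau>) \<le> 2"
  by (cases \<tau>; simp)+

interpretation sg: small_junction_igs sg_S sg_E sg_t sg_I
proof
  show "(x, y) \<in> sg_E \<Longrightarrow> (y, x) \<notin> sg_E" for x y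
    unfolding sg_E_def by (simp, elim disjE conjE, simp_all)
  show "single_valued (sg_I \<tau>)" "single_valued ((sg_I \<tau>)\<inverse>)" for \<tau>
    by (cases \<tau>; simp add: single_valued_def)+
  show corner: "(d, e) \<notin> cell_glue sg_E sg_t sg_I d f" for d e f
    by (simp add: sg_cell_glue)
  show "(c, e) \<in> cell_glue sg_E sg_t sg_I d f \<Longrightarrow> (c, e') \<in> cell_glue sg_E sg_t sg_I d f' \<Longrightarrow>
      f = f' \<and> e = e'" for c e d f e' f'
    unfolding sg_cell_glue by (elim insertE emptyE; simp)
  show "(c, e) \<in> cell_glue sg_E sg_t sg_I d f \<Longrightarrow> on_one_side sg_I {d, c} \<Longrightarrow> f = c \<and> e = d"
    for c e d f
    unfolding sg_cell_glue on_one_side_def ex_sg_type by (simp; elim disjE conjE; simp)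
  show "d \<noteq> c \<Longrightarrow> {d, c} \<subseteq> Domain (cell_glue sg_E sg_t sg_I a b) \<Longrightarrow>
      \<not> on_one_side sg_I {a, d, c}" for d c a b
    by (rule not_on_one_side_if_two_pairs[OF sg_I_finite sg_I_card corner])
qed

interpretation pc: small_junction_igs pc_S pc_E pc_t pc_I
proof
  show "(x, y) \<in> pc_E \<Longrightarrow> (y, x) \<notin> pc_E" for x y
    unfolding pc_E_def by (simp, elim disjE conjE, simp_all)
  show "single_valued (pc_I \<tau>)" "single_valued ((pc_I \<tau>)\<inverse>)" for \<tau>
    by (cases \<tau>; simp add: single_valued_def)+
  show corner: "(d, e) \<notin> cell_glue pc_E pc_t pc_I d f" for d e f
    by (simp add: pc_cell_glue)
  show "(c, e) \<in> cell_glue pc_E pc_t pc_I d f \<Longrightarrow> (c, e') \<in> cell_glue pc_E pc_t pc_I d f' \<Longrightarrow>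
      f = f' \<and> e = e'" for c e d f e' f'
    unfolding pc_cell_glue by (elim insertE emptyE; simp)
  show "(c, e) \<in> cell_glue pc_E pc_t pc_I d f \<Longrightarrow> on_one_side pc_I {d, c} \<Longrightarrow> f = c \<and> e = d"
    for c e d f
    unfolding pc_cell_glue on_one_side_def ex_pc_type by (simp; elim disjE conjE; simp)
  show "d \<noteq> c \<Longrightarrow> {d, c} \<subseteq> Domain (cell_glue pc_E pc_t pc_I a b) \<Longrightarrow>
      \<not> on_one_side pc_I {a, d, c}" for d c a b
    by (rule not_on_one_side_if_two_pairs[OF pc_I_finite pc_I_card corner])
qed

lemma IGS_sg: "IGS sg_S sg_E sg_T sg_t sg_I"
proof -
  have "gconnected sg_S sg_E"
    by (rule gconnectedI_diameter_two) (simp add: sg_S_def sg_E_def, elim disjE; simp)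
  moreover have "finite sg_S \<and> sg_S \<noteq> {} \<and> sg_E \<subseteq> sg_S \<times> sg_S \<and> finite sg_T \<and>
      sg_t ` sg_E = sg_T \<and> (\<forall>\<tau>\<in>sg_T. sg_I \<tau> \<noteq> {} \<and> sg_I \<tau> \<subseteq> sg_S \<times> sg_S)"
    by (simp add: sg_S_def sg_E_def sg_T_def sg_t_def insert_commute)
  ultimately show ?thesis unfolding IGS_def using sg.E_asym by blast
qed

lemma IGS_pc: "IGS pc_S pc_E pc_T pc_t pc_I"
proof -
  have "gconnected pc_S pc_E"
    by (rule gconnectedI_diameter_two) (simp add: pc_S_def pc_E_def, elim disjE; simp)
  moreover have "finite pc_S \<and> pc_S \<noteq> {} \<and> pc_E \<subseteq> pc_S \<times> pc_S \<and> finite pc_T \<and>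
      pc_t ` pc_E = pc_T \<and> (\<forall>\<tau>\<in>pc_T. pc_I \<tau> \<noteq> {} \<and> pc_I \<tau> \<subseteq> pc_S \<times> pc_S)"
    by (simp add: pc_S_def pc_E_def pc_T_def pc_t_def insert_commute)
  ultimately show ?thesis unfolding IGS_def using pc.E_asym by blast
qed

theorem proposition5p9:
  shows "IGS sg_S sg_E sg_T sg_t sg_I \<and> bounded_geometry sg_S sg_E sg_t sg_I \<and>
         IGS pc_S pc_E pc_T pc_t pc_I \<and> bounded_geometry pc_S pc_E pc_t pc_I"
  using IGS_sg sg.bounded_geometry IGS_pc pc.bounded_geometry by blast

end
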